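(* Assume the standing assumptions and let $f$ satisfy (F); let $g$, $b_g$, $\gamma_g$ be as below. Then the problem $$\partial_t\tilde s=\Delta_h\tilde s+b_g\big[D^+_hg\,D^+_h\tilde s+D^-_hg\,D^-_h\tilde s\big]+\gamma_g\,\tilde s\,(Bf-1)\ \text{ on }(0,T]\times\Omega_h^+,$$ $$\tilde s(0,x)=s_0(x)\ (x\in\Omega_h^+),\qquad \tilde s(t,0)=\psi(t)\ (t\in[0,T]),$$ has a unique bounded solution $\tilde s$, and $0\le\tilde s(t,x)\le\eta$ for all $(t,x)\in[0,T]\times\Omega_h^+$.
   Context: Discrete setting: $h>0$, $\Omega_h^+=\{h,2h,\dots\}$, $\Omega_{h,0}^+=\Omega_h^+\cup\{0\}$, $\|f\|_{L^p(\Omega_h^+)}=(h\sum_{z\in\Omega_h^+}|f(z)|^p)^{1/p}$, $D^+_hf(x)=\frac{f(x+h)-f(x)}{h}$, $D^-_hf(x)=\frac{f(x)-f(x-h)}{h}$, $\Delta_hf(x)=\frac{f(x+h)-2f(x)+f(x-h)}{h^2}$. Standing assumptions: $A=1$, $B\in\{-1,1\}$, $\varphi(c)=A+Bc$, $\lambda>0$, $T>0$, $\eta>0$; $\psi\in C^\beta([0,T])$ for some $\beta\in(1/4,1/2)$ with $0\le\psi\le\eta$, $\psi(0)=0$; $s_0:\Omega_{h,0}^+\to\mathbb{R}$ with $0\le s_0\le\eta$, $s_0(0)=0$, $s_0,D^+_hs_0\in L^2(\Omega_h^+)$; $c_0:\Omega_{h,0}^+\to\mathbb{R}$ with $0<c_m\le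 c_0\le C_0$ and $C_0-c_0,\ D^+_hc_0\in L^2(\Omega_h^+)$; there are constants $0<\varphi_{\min}\le\varphi_{\max}$ with $\varphi_{\min}\le\varphi(c)\le\varphi_{\max}$ for all $c\in[0,C_0]$; if $B=1$ then $\eta<1$. Conditions (F) on a Borel $f:[0,T]\times\Omega_{h,0}^+\to\mathbb{R}$, for some $K>0$: $f\in C([0,T],L^2(\Omega_h^+))$, $\sup_t\|f(t)\|^2_{L^2}+\int_0^T\|D^+_hf(t)\|^2_{L^2}dt\le K$, $f\ge0$, $f(t,0)=\psi(t)$, $0\le f\le\eta$. Linearized coefficients: $g(t,x)=Ac_0(x)[\varphi(c_0(x))e^{\lambda A\int_0^tf(\tau,x)d\tau}-Bc_0(x)]^{-1}$, $b_g=\frac{B}{2(A+Bg)}$, $\gamma_g=\lambda g$. *)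

theory Defs
  imports "HOL-Analysis.Analysis"
begin

text \<open>Grid functions on \<Omega>_{h,0}^+ = {0,h,2h,...} are represented as functions
  nat \<Rightarrow> real, index k standing for the grid point x = k*h.
  \<Omega>_h^+ corresponds to indices k \<ge> 1.\<close>

definition Dp :: "real \<Rightarrow> (nat \<Rightarrow> real) \<Rightarrow> nat \<Rightarrow> real" where
  "Dp h u k = (u (k+1) - u k) / h"

definition Dm :: "real \<Rightarrow> (nat \<Rightarrow> real) \<Rightarrow> nat \<Rightarrow> real" where
  "Dm h u k = (u k - u (k-1)) / h"

definition Lap :: "real \<Rightarrow> (nat \<Rightarrow> real) \<Rightarrow> nat \<Rightarrow> real" where
  "Lap h u k = (u (k+1) - 2 * u k + u (k-1)) / h^2"

definition in_L2 :: "(nat \<Rightarrow> real) \<Rightarrow> bool" where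
  "in_L2 u \<longleftrightarrow> summable (\<lambda>k. (u (Suc k))\<^sup>2)"

definition L2norm :: "real \<Rightarrow> (nat \<Rightarrow> real) \<Rightarrow> real" where
  "L2norm h u = sqrt (h * (\<Sum>k. (u (Suc k))\<^sup>2))"

text \<open>Squared L^2 norm valued in extended nonnegative reals (infinite if u \<notin> L^2).\<close>
definition L2sq_e :: "real \<Rightarrow> (nat \<Rightarrow> real) \<Rightarrow> ennreal" where
  "L2sq_e h u = ennreal h * (\<Sum>k. ennreal ((u (Suc k))\<^sup>2))"

definition holder_on :: "real \<Rightarrow> real set \<Rightarrow> (real \<Rightarrow> real) \<Rightarrow> bool" where
  "holder_on \<beta> S p \<longleftrightarrow> (\<exists>C. \<forall>t\<in>S. \<forall>s\<in>S. \<bar>p t - p s\<bar> \<le> C * \<bar>t - s\<bar> powr \<beta>)"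

definition phi :: "real \<Rightarrow> real \<Rightarrow> real \<Rightarrow> real" where
  "phi A B c = A + B * c"

definition lin_g :: "real \<Rightarrow> real \<Rightarrow> real \<Rightarrow> (nat \<Rightarrow> real) \<Rightarrow> (real \<Rightarrow> nat \<Rightarrow> real) \<Rightarrow> real \<Rightarrow> nat \<Rightarrow> real" where
  "lin_g A B lam c0 f t k =
     A * c0 k / (phi A B (c0 k) * exp (lam * A * integral {0..t} (\<lambda>\<tau>. f \<tau> k)) - B * c0 k)"

definition b_coef :: "real \<Rightarrow> real \<Rightarrow> real \<Rightarrow> real" where
  "b_coef A B gv = B / (2 * (A + B * gv))"

definition gamma_coef :: "real \<Rightarrow> real \<Rightarrow> real" where
  "gamma_coef lam gv = lam * gv"

definition cond_F :: "real \<Rightarrow> real \<Rightarrow> real \<Rightarrow> (real \<Rightarrow> real) \<Rightarrow> real \<Rightarrow> (real \<Rightarrow> nat \<Rightarrow> real) \<Rightarrow> bool" where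
  "cond_F h T \<eta> \<psi> K f \<longleftrightarrow>
     (\<forall>k. (\<lambda>t. f t k) \<in> borel_measurable (restrict_space borel {0..T})) \<and>
     (\<forall>t\<in>{0..T}. in_L2 (f t)) \<and>
     (\<forall>t\<in>{0..T}. ((\<lambda>\<tau>. L2norm h (\<lambda>k. f \<tau> k - f t k)) \<longlongrightarrow> 0) (at t within {0..T})) \<and>
     (SUP t\<in>{0..T}. L2sq_e h (f t)) + (\<integral>\<^sup>+ t\<in>{0..T}. L2sq_e h (Dp h (f t)) \<partial>lborel) \<le> ennreal K \<and>
     (\<forall>t\<in>{0..T}. \<forall>k. 0 \<le> f t k) \<and>
     (\<forall>t\<in>{0..T}. f t 0 = \<psi> t) \<and>
     (\<forall>t\<in>{0..T}. \<forall>k. f t k \<le> \<eta>)"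

definition is_lin_solution ::
  "real \<Rightarrow> real \<Rightarrow> real \<Rightarrow> real \<Rightarrow> real \<Rightarrow> (real \<Rightarrow> real) \<Rightarrow> (nat \<Rightarrow> real) \<Rightarrow> (nat \<Rightarrow> real)
   \<Rightarrow> (real \<Rightarrow> nat \<Rightarrow> real) \<Rightarrow> (real \<Rightarrow> nat \<Rightarrow> real) \<Rightarrow> bool" where
  "is_lin_solution h A B lam T \<psi> s0 c0 f s \<longleftrightarrow>
     (\<forall>k\<ge>1. continuous_on {0..T} (\<lambda>t. s t k)) \<and>
     (\<forall>k\<ge>1. \<forall>t\<in>{0<..T}.
        ((\<lambda>\<tau>. s \<tau> k) has_real_derivative
           (Lap h (s t) k
            + b_coef A B (lin_g A B lam c0 f t k)
                * (Dp h (lin_g A B lam c0 f t) k * Dp h (s t) k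
                   + Dm h (lin_g A B lam c0 f t) k * Dm h (s t) k)
            + gamma_coef lam (lin_g A B lam c0 f t k) * s t k * (B * f t k - 1)))
        (at t within {0..T})) \<and>
     (\<forall>k\<ge>1. s 0 k = s0 k) \<and>
     (\<forall>t\<in>{0..T}. s t 0 = \<psi> t)"

definition bounded_on_T :: "real \<Rightarrow> (real \<Rightarrow> nat \<Rightarrow> real) \<Rightarrow> bool" where
  "bounded_on_T T s \<longleftrightarrow> (\<exists>M. \<forall>t\<in>{0..T}. \<forall>k. \<bar>s t k\<bar> \<le> M)"

end

theory Submission
  imports Defs
begin

(* Written as a_k s(k-1) + b_k s(k) + c_k s(k+1), the right-hand side is an infinite
   tridiagonal linear system with bounded coefficients, nonnegative off-diagonal coefficients and
   nonpositive row sums a_k + b_k + c_k = lam g (B f - 1); the last point is where eta < 1 is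
   needed when B = 1. If all coefficients are bounded by Lambda, then for v = exp (Lambda t) s all
   coefficients are nonnegative, so the Picard map of the integral equation for v is monotone and
   preserves 0 <= v <= eta exp (Lambda t); the increasing Picard iterates started from 0 converge
   to a solution with 0 <= s <= eta. Two bounded solutions differ by a bounded solution w with zero
   data, and on each time step of length 1 / (6 Lambda) the mean value theorem gives
   sup |w| <= sup |w| / 2, so w vanishes step by step. *)

section \<open>Infinite tridiagonal linear systems\<close>

definition tridiag :: "(nat \<Rightarrow> real) \<Rightarrow> (nat \<Rightarrow> real) \<Rightarrow> (nat \<Rightarrow> real) \<Rightarrow> (nat \<Rightarrow> real) \<Rightarrow> nat \<Rightarrow> real"
  where "tridiag a b c u k = a k * u (k - 1) + b k * u k + c k * u (k + 1)"

definition tridiag_solution ::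
  "real \<Rightarrow> (real \<Rightarrow> nat \<Rightarrow> real) \<Rightarrow> (real \<Rightarrow> nat \<Rightarrow> real) \<Rightarrow> (real \<Rightarrow> nat \<Rightarrow> real)
   \<Rightarrow> (real \<Rightarrow> real) \<Rightarrow> (nat \<Rightarrow> real) \<Rightarrow> (real \<Rightarrow> nat \<Rightarrow> real) \<Rightarrow> bool" where
  "tridiag_solution T a b c \<psi> s0 s \<longleftrightarrow>
     (\<forall>k\<ge>1. continuous_on {0..T} (\<lambda>t. s t k)) \<and>
     (\<forall>k\<ge>1. \<forall>t\<in>{0<..T}.
        ((\<lambda>\<tau>. s \<tau> k) has_real_derivative tridiag (a t) (b t) (c t) (s t) k) (at t within {0..T})) \<and>
     (\<forall>k\<ge>1. s 0 k = s0 k) \<and>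
     (\<forall>t\<in>{0..T}. s t 0 = \<psi> t)"

lemma tridiag_diff:
  "tridiag a b c (\<lambda>j. u j - v j) k = tridiag a b c u k - tridiag a b c v k"
  unfolding tridiag_def by (simp add: algebra_simps)

lemma tridiag_const: "tridiag a b c (\<lambda>_. M) k = (a k + b k + c k) * M"
  unfolding tridiag_def by (simp add: algebra_simps)

lemma tridiag_abs_le:
  assumes "\<bar>a k\<bar> \<le> \<Lambda>" "\<bar>b k\<bar> \<le> \<Lambda>" "\<bar>c k\<bar> \<le> \<Lambda>" and u: "\<And>j. \<bar>u j\<bar> \<le> X"
  shows "\<bar>tridiag a b c u k\<bar> \<le> 3 * \<Lambda> * X"
proof -
  have "\<bar>a k * u (k - 1)\<bar> \<le> \<Lambda> * X" "\<bar>b k * u k\<bar> \<le> \<Lambda> * X" "\<bar>c k * u (k + 1)\<bar> \<le> \<Lambda> * X"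
    unfolding abs_mult using assms by (auto intro!: mult_mono)
  then show ?thesis unfolding tridiag_def by linarith
qed

lemma tridiag_mono:
  assumes "0 \<le> a k" "0 \<le> b k" "0 \<le> c k" and "\<And>j. u j \<le> v j"
  shows "tridiag a b c u k \<le> tridiag a b c v k"
  unfolding tridiag_def using assms by (intro add_mono mult_left_mono) auto

lemma tridiag_solution_diff:
  assumes "tridiag_solution T a b c \<psi> s0 s1" "tridiag_solution T a b c \<psi> s0 s2"
  shows "tridiag_solution T a b c (\<lambda>_. 0) (\<lambda>_. 0) (\<lambda>t k. s1 t k - s2 t k)"
  using assms unfolding tridiag_solution_def tridiag_diff
  by (auto intro!: continuous_intros DERIV_diff)

lemma tridiag_solution_halving:
  assumes coef: "\<And>t k. t \<in> {0..T} \<Longrightarrow> \<bar>a t k\<bar> \<le> \<Lambda> \<and> \<bar>b t k\<bar> \<le> \<Lambda> \<and> \<bar>c t k\<bar> \<le> \<Lambda>"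
    and "0 < \<Lambda>" and w: "tridiag_solution T a b c (\<lambda>_. 0) (\<lambda>_. 0) w"
    and "0 \<le> t0" and vanish: "\<And>t k. t \<in> {0..T} \<Longrightarrow> t \<le> t0 \<Longrightarrow> w t k = 0"
    and bound: "\<And>t k. t \<in> {0..T} \<Longrightarrow> t \<le> t0 + 1 / (6 * \<Lambda>) \<Longrightarrow> \<bar>w t k\<bar> \<le> X"
    and t: "t \<in> {0..T}" "t \<le> t0 + 1 / (6 * \<Lambda>)"
  shows "\<bar>w t k\<bar> \<le> X / 2"
proof (cases "t \<le> t0 \<or> k = 0")
  case True
  then have "w t k = 0" using vanish w t unfolding tridiag_solution_def by auto
  moreover have "0 \<le> X" using bound[OF t] by (meson abs_ge_zero order_trans)
  ultimately show ?thesis by simp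
next
  case False
  then have t0t: "t0 < t" and k: "1 \<le> k" by auto
  have cont: "continuous_on {t0..t} (\<lambda>\<tau>. w \<tau> k)"
  proof (rule continuous_on_subset)
    show "continuous_on {0..T} (\<lambda>\<tau>. w \<tau> k)" using w k unfolding tridiag_solution_def by auto
    show "{t0..t} \<subseteq> {0..T}" using \<open>0 \<le> t0\<close> t by auto
  qed
  have deriv: "((\<lambda>\<tau>. w \<tau> k) has_real_derivative tridiag (a x) (b x) (c x) (w x) k) (at x)"
    if "t0 < x" "x < t" for x
  proof -
    have "x \<in> {0<..T}" "at x within {0..T} = at x"
      using that \<open>0 \<le> t0\<close> t by (auto intro: at_within_interior)
    with w k show ?thesis unfolding tridiag_solution_def by metis
  qed
  obtain l z where z: "t0 < z" "z < t" and dz: "((\<lambda>\<tau>. w \<tau> k) has_real_derivative l) (at z)"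
    and mvt: "w t k - w t0 k = (t - t0) * l"
    using MVT[OF t0t cont] deriv by (meson real_differentiable_def)
  have zT: "z \<in> {0..T}" using z \<open>0 \<le> t0\<close> t by auto
  have l: "\<bar>l\<bar> \<le> 3 * \<Lambda> * X"
    unfolding DERIV_unique[OF dz deriv[OF z]] using coef[OF zT] bound zT z t
    by (intro tridiag_abs_le) auto
  moreover have "w t0 k = 0" using vanish \<open>0 \<le> t0\<close> t0t t by auto
  ultimately have "\<bar>w t k\<bar> \<le> (t - t0) * (3 * \<Lambda> * X)"
    using mvt t0t by (simp add: abs_mult mult_left_mono)
  also have "\<dots> \<le> 1 / (6 * \<Lambda>) * (3 * \<Lambda> * X)"
    using order_trans[OF abs_ge_zero l] t by (intro mult_right_mono) auto
  also have "\<dots> = X / 2" using \<open>0 < \<Lambda>\<close> by simp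
  finally show ?thesis .
qed

lemma tridiag_solution_vanishing_extends:
  assumes coef: "\<And>t k. t \<in> {0..T} \<Longrightarrow> \<bar>a t k\<bar> \<le> \<Lambda> \<and> \<bar>b t k\<bar> \<le> \<Lambda> \<and> \<bar>c t k\<bar> \<le> \<Lambda>"
    and "0 < \<Lambda>" and w: "tridiag_solution T a b c (\<lambda>_. 0) (\<lambda>_. 0) w"
    and M: "\<And>t k. t \<in> {0..T} \<Longrightarrow> \<bar>w t k\<bar> \<le> M"
    and "0 \<le> t0" and vanish: "\<And>t k. t \<in> {0..T} \<Longrightarrow> t \<le> t0 \<Longrightarrow> w t k = 0"
    and t: "t \<in> {0..T}" "t \<le> t0 + 1 / (6 * \<Lambda>)"
  shows "w t k = 0"
proof -
  have halved: "\<bar>w t k\<bar> \<le> M / 2 ^ n"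
    if "t \<in> {0..T}" "t \<le> t0 + 1 / (6 * \<Lambda>)" for n t k
    using that
  proof (induction n arbitrary: t k)
    case 0
    then show ?case using M by simp
  next
    case (Suc n)
    show ?case
      using tridiag_solution_halving[OF coef \<open>0 < \<Lambda>\<close> w \<open>0 \<le> t0\<close> vanish Suc.IH Suc.prems]
      by (simp add: field_simps)
  qed
  have "(\<lambda>n. M / 2 ^ n) \<longlonglongrightarrow> 0"
    by (intro LIMSEQ_divide_realpow_zero) auto
  then have "\<bar>w t k\<bar> \<le> 0"
    by (rule LIMSEQ_le_const) (use halved[OF t] in auto)
  then show ?thesis by simp
qed

lemma tridiag_solution_zero:
  assumes coef: "\<And>t k. t \<in> {0..T} \<Longrightarrow> \<bar>a t k\<bar> \<le> \<Lambda> \<and> \<bar>b t k\<bar> \<le> \<Lambda> \<and> \<bar>c t k\<bar> \<le> \<Lambda>"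
    and "0 < \<Lambda>" and w: "tridiag_solution T a b c (\<lambda>_. 0) (\<lambda>_. 0) w" "bounded_on_T T w"
    and t: "t \<in> {0..T}"
  shows "w t k = 0"
proof -
  obtain M where M: "\<And>t k. t \<in> {0..T} \<Longrightarrow> \<bar>w t k\<bar> \<le> M"
    using w(2) unfolding bounded_on_T_def by blast
  have "\<forall>t\<in>{0..T}. t \<le> m / (6 * \<Lambda>) \<longrightarrow> (\<forall>k. w t k = 0)" for m :: nat
  proof (induction m)
    case 0
    have "w 0 k = 0" if "0 \<le> T" for k
      using w(1) that unfolding tridiag_solution_def by (cases "k = 0") auto
    then show ?case by auto
  next
    case (Suc m)
    have "m / (6 * \<Lambda>) + 1 / (6 * \<Lambda>) = Suc m / (6 * \<Lambda>)"
      by (simp add: add_divide_distrib)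
    then show ?case
      using tridiag_solution_vanishing_extends[OF coef \<open>0 < \<Lambda>\<close> w(1) M, of "m / (6 * \<Lambda>)"]
        Suc.IH \<open>0 < \<Lambda>\<close> by auto
  qed
  moreover obtain m :: nat where "t * (6 * \<Lambda>) \<le> m"
    using real_arch_simple by blast
  ultimately show ?thesis
    using t \<open>0 < \<Lambda>\<close> by (auto simp: le_divide_eq)
qed

lemma tridiag_solution_unique:
  assumes coef: "\<And>t k. t \<in> {0..T} \<Longrightarrow> \<bar>a t k\<bar> \<le> \<Lambda> \<and> \<bar>b t k\<bar> \<le> \<Lambda> \<and> \<bar>c t k\<bar> \<le> \<Lambda>"
    and "0 < \<Lambda>"
    and s1: "tridiag_solution T a b c \<psi> s0 s1" "bounded_on_T T s1"
    and s2: "tridiag_solution T a b c \<psi> s0 s2" "bounded_on_T T s2"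
    and t: "t \<in> {0..T}"
  shows "s1 t k = s2 t k"
proof -
  obtain M1 M2 where "\<And>t k. t \<in> {0..T} \<Longrightarrow> \<bar>s1 t k\<bar> \<le> M1" "\<And>t k. t \<in> {0..T} \<Longrightarrow> \<bar>s2 t k\<bar> \<le> M2"
    using s1(2) s2(2) unfolding bounded_on_T_def by metis
  then have "bounded_on_T T (\<lambda>t k. s1 t k - s2 t k)"
    unfolding bounded_on_T_def by (meson abs_triangle_ineq4 add_mono order_trans)
  with tridiag_solution_zero[OF coef \<open>0 < \<Lambda>\<close> tridiag_solution_diff[OF s1(1) s2(1)]] t
  show ?thesis by simp
qed

locale metzler_tridiag =
  fixes T \<Lambda> \<eta> :: real and a b c :: "real \<Rightarrow> nat \<Rightarrow> real"
    and \<psi> :: "real \<Rightarrow> real" and s0 :: "nat \<Rightarrow> real"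
  assumes T_nonneg: "0 \<le> T" and \<Lambda>_pos: "0 < \<Lambda>"
    and sub_continuous: "\<And>k. continuous_on {0..T} (\<lambda>t. a t k)"
    and diag_continuous: "\<And>k. continuous_on {0..T} (\<lambda>t. b t k)"
    and super_continuous: "\<And>k. continuous_on {0..T} (\<lambda>t. c t k)"
    and sub_bounds: "\<And>t k. t \<in> {0..T} \<Longrightarrow> 0 \<le> a t k \<and> a t k \<le> \<Lambda>"
    and diag_bound: "\<And>t k. t \<in> {0..T} \<Longrightarrow> \<bar>b t k\<bar> \<le> \<Lambda>"
    and super_bounds: "\<And>t k. t \<in> {0..T} \<Longrightarrow> 0 \<le> c t k \<and> c t k \<le> \<Lambda>"
    and row_sum_nonpos: "\<And>t k. t \<in> {0..T} \<Longrightarrow> a t k + b t k + c t k \<le> 0"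
    and boundary_continuous: "continuous_on {0..T} \<psi>"
    and boundary_bounds: "\<And>t. t \<in> {0..T} \<Longrightarrow> 0 \<le> \<psi> t \<and> \<psi> t \<le> \<eta>"
    and initial_bounds: "\<And>k. 0 \<le> s0 k \<and> s0 k \<le> \<eta>"
begin

text \<open>\<open>v t = exp (\<Lambda> t) * s t\<close> solves \<open>v' = shifted t v\<close>.\<close>
definition shifted :: "real \<Rightarrow> (nat \<Rightarrow> real) \<Rightarrow> nat \<Rightarrow> real"
  where "shifted t = tridiag (a t) (\<lambda>k. b t k + \<Lambda>) (c t)"

lemma shifted_continuous:
  assumes "\<And>j. continuous_on {0..T} (\<lambda>t. u t j)"
  shows "continuous_on {0..T} (\<lambda>t. shifted t (u t) k)"
  unfolding shifted_def tridiag_def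
  by (intro continuous_intros sub_continuous diag_continuous super_continuous assms)

lemma shifted_mono:
  assumes "t \<in> {0..T}" "\<And>j. u j \<le> v j"
  shows "shifted t u k \<le> shifted t v k"
  unfolding shifted_def using assms sub_bounds super_bounds diag_bound[OF assms(1), of k]
  by (intro tridiag_mono) auto

lemma shifted_bounds:
  assumes t: "t \<in> {0..T}" and u: "\<And>j. 0 \<le> u j \<and> u j \<le> M"
  shows "0 \<le> shifted t u k \<and> shifted t u k \<le> \<Lambda> * M"
proof
  have "shifted t (\<lambda>_. 0) k \<le> shifted t u k" using shifted_mono[OF t] u by auto
  then show "0 \<le> shifted t u k" unfolding shifted_def tridiag_const by simp
  have "shifted t u k \<le> shifted t (\<lambda>_. M) k" using shifted_mono[OF t] u by auto
  also have "\<dots> = (a t k + b t k + c t k) * M + \<Lambda> * M"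
    unfolding shifted_def tridiag_const by (simp add: algebra_simps)
  also have "\<dots> \<le> \<Lambda> * M"
    using row_sum_nonpos[OF t] u[of 0] by (simp add: mult_nonpos_nonneg)
  finally show "shifted t u k \<le> \<Lambda> * M" .
qed

primrec picard :: "nat \<Rightarrow> real \<Rightarrow> nat \<Rightarrow> real" where
  "picard 0 t k = (if k = 0 then exp (\<Lambda> * t) * \<psi> t else 0)"
| "picard (Suc n) t k = (if k = 0 then exp (\<Lambda> * t) * \<psi> t
     else s0 k + integral {0..t} (\<lambda>\<tau>. shifted \<tau> (picard n \<tau>) k))"

lemma picard_continuous: "continuous_on {0..T} (\<lambda>t. picard n t k)"
proof (induction n arbitrary: k)
  case 0
  then show ?case by (cases "k = 0") (auto intro!: continuous_intros boundary_continuous)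
next
  case (Suc n)
  have "continuous_on {0..T} (\<lambda>t. integral {0..t} (\<lambda>\<tau>. shifted \<tau> (picard n \<tau>) k))"
    by (intro indefinite_integral_continuous_1 integrable_continuous_interval
        shifted_continuous Suc.IH)
  then show ?case by (cases "k = 0") (auto intro!: continuous_intros boundary_continuous)
qed

lemma picard_integrable: "t \<le> T \<Longrightarrow> (\<lambda>\<tau>. shifted \<tau> (picard n \<tau>) k) integrable_on {0..t}"
  by (rule integrable_on_subinterval[OF integrable_continuous_interval])
    (auto intro: shifted_continuous picard_continuous)

lemma has_integral_exp_bound:
  assumes "0 \<le> t"
  shows "((\<lambda>\<tau>. \<Lambda> * (\<eta> * exp (\<Lambda> * \<tau>))) has_integral \<eta> * exp (\<Lambda> * t) - \<eta>) {0..t}"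
proof -
  have "((\<lambda>\<tau>. \<Lambda> * (\<eta> * exp (\<Lambda> * \<tau>))) has_integral \<eta> * exp (\<Lambda> * t) - \<eta> * exp (\<Lambda> * 0)) {0..t}"
    by (rule fundamental_theorem_of_calculus[OF assms])
      (auto simp: has_real_derivative_iff_has_vector_derivative[symmetric] intro!: derivative_eq_intros)
  then show ?thesis by simp
qed

lemma picard_bounds: "t \<in> {0..T} \<Longrightarrow> 0 \<le> picard n t k \<and> picard n t k \<le> \<eta> * exp (\<Lambda> * t)"
proof (induction n arbitrary: t k)
  case 0
  then show ?case using boundary_bounds[OF 0] by (auto simp: mult_left_mono mult.commute)
next
  case (Suc n)
  show ?case
  proof (cases "k = 0")
    case True
    then show ?thesis using boundary_bounds[OF Suc.prems] by (auto simp: mult_left_mono mult.commute)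
  next
    case False
    have t: "0 \<le> t" "t \<le> T" using Suc.prems by auto
    have integrand: "0 \<le> shifted \<tau> (picard n \<tau>) k \<and> shifted \<tau> (picard n \<tau>) k \<le> \<Lambda> * (\<eta> * exp (\<Lambda> * \<tau>))"
      if "\<tau> \<in> {0..t}" for \<tau>
      using that t by (intro shifted_bounds Suc.IH) auto
    have "0 \<le> integral {0..t} (\<lambda>\<tau>. shifted \<tau> (picard n \<tau>) k)"
      using integral_nonneg[OF picard_integrable[OF t(2)]] integrand by auto
    moreover have "integral {0..t} (\<lambda>\<tau>. shifted \<tau> (picard n \<tau>) k) \<le> \<eta> * exp (\<Lambda> * t) - \<eta>"
      using has_integral_le[OF integrable_integral[OF picard_integrable[OF t(2)]] has_integral_exp_bound[OF t(1)]]
        integrand by auto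
    ultimately show ?thesis
      using False initial_bounds[of k] order_trans[OF _ mult_nonneg_nonneg] by auto
  qed
qed

lemma picard_mono: "t \<in> {0..T} \<Longrightarrow> picard n t k \<le> picard (Suc n) t k"
proof (induction n arbitrary: t k)
  case 0
  then show ?case using picard_bounds[OF 0, of "Suc 0" k] by auto
next
  case (Suc n)
  have "integral {0..t} (\<lambda>\<tau>. shifted \<tau> (picard n \<tau>) k)
      \<le> integral {0..t} (\<lambda>\<tau>. shifted \<tau> (picard (Suc n) \<tau>) k)"
    using Suc.prems by (intro integral_le picard_integrable shifted_mono Suc.IH) auto
  then show ?case by simp
qed

definition picard_limit :: "real \<Rightarrow> nat \<Rightarrow> real"
  where "picard_limit t k = (SUP n. picard n t k)"

lemma picard_tendsto: "t \<in> {0..T} \<Longrightarrow> (\<lambda>n. picard n t k) \<longlonglongrightarrow> picard_limit t k"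
  unfolding picard_limit_def using picard_bounds picard_mono
  by (intro LIMSEQ_incseq_SUP bdd_aboveI2 incseq_SucI) blast+

lemma picard_limit_bounds:
  "t \<in> {0..T} \<Longrightarrow> 0 \<le> picard_limit t k \<and> picard_limit t k \<le> \<eta> * exp (\<Lambda> * t)"
  using LIMSEQ_le_const[OF picard_tendsto] LIMSEQ_le_const2[OF picard_tendsto] picard_bounds
  by meson

lemma picard_limit_boundary: "picard_limit t 0 = exp (\<Lambda> * t) * \<psi> t"
proof -
  have "picard n t 0 = exp (\<Lambda> * t) * \<psi> t" for n by (cases n) auto
  then show ?thesis unfolding picard_limit_def by simp
qed

lemma picard_limit_integral_equation:
  assumes t: "t \<in> {0..T}" and k: "k \<noteq> 0"
  shows "(\<lambda>\<tau>. shifted \<tau> (picard_limit \<tau>) k) integrable_on {0..t}"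
    and "picard_limit t k = s0 k + integral {0..t} (\<lambda>\<tau>. shifted \<tau> (picard_limit \<tau>) k)"
proof -
  have dominated: "norm (shifted \<tau> (picard n \<tau>) k) \<le> \<Lambda> * (\<eta> * exp (\<Lambda> * T))"
    if "\<tau> \<in> {0..t}" for n \<tau>
  proof -
    have \<tau>: "\<tau> \<in> {0..T}" using that t by auto
    have "\<eta> * exp (\<Lambda> * \<tau>) \<le> \<eta> * exp (\<Lambda> * T)"
      using \<tau> \<Lambda>_pos initial_bounds[of 0] by (intro mult_left_mono) auto
    then have "0 \<le> shifted \<tau> (picard n \<tau>) k \<and> shifted \<tau> (picard n \<tau>) k \<le> \<Lambda> * (\<eta> * exp (\<Lambda> * T))"
      using \<tau> picard_bounds[OF \<tau>] by (intro shifted_bounds) (meson order_trans)+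
    then show ?thesis by simp
  qed
  have pointwise: "(\<lambda>n. shifted \<tau> (picard n \<tau>) k) \<longlonglongrightarrow> shifted \<tau> (picard_limit \<tau>) k"
    if "\<tau> \<in> {0..t}" for \<tau>
    using that t unfolding shifted_def tridiag_def by (intro tendsto_intros picard_tendsto) auto
  note limit = dominated_convergence[OF picard_integrable integrable_const_ivl dominated pointwise]
  show "(\<lambda>\<tau>. shifted \<tau> (picard_limit \<tau>) k) integrable_on {0..t}"
    using limit(1) t by auto
  have "(\<lambda>n. picard (Suc n) t k) \<longlonglongrightarrow> s0 k + integral {0..t} (\<lambda>\<tau>. shifted \<tau> (picard_limit \<tau>) k)"
    using k limit(2) t by (auto intro: tendsto_add)
  moreover have "(\<lambda>n. picard (Suc n) t k) \<longlonglongrightarrow> picard_limit t k"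
    using picard_tendsto[OF t] by (rule LIMSEQ_Suc)
  ultimately show "picard_limit t k = s0 k + integral {0..t} (\<lambda>\<tau>. shifted \<tau> (picard_limit \<tau>) k)"
    using LIMSEQ_unique by blast
qed

lemma picard_limit_continuous: "continuous_on {0..T} (\<lambda>t. picard_limit t k)"
proof (cases "k = 0")
  case True
  then show ?thesis
    unfolding True picard_limit_boundary by (auto intro!: continuous_intros boundary_continuous)
next
  case False
  have "continuous_on {0..T} (\<lambda>t. s0 k + integral {0..t} (\<lambda>\<tau>. shifted \<tau> (picard_limit \<tau>) k))"
    using picard_limit_integral_equation(1)[OF _ False] T_nonneg
    by (auto intro!: continuous_intros indefinite_integral_continuous_1)
  then show ?thesis
    by (rule continuous_on_eq) (use picard_limit_integral_equation(2)[OF _ False] in auto)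
qed

lemma picard_limit_derivative:
  assumes t: "t \<in> {0..T}" and k: "k \<noteq> 0"
  shows "((\<lambda>\<tau>. picard_limit \<tau> k) has_real_derivative shifted t (picard_limit t) k) (at t within {0..T})"
proof -
  have "((\<lambda>\<tau>. s0 k + integral {0..\<tau>} (\<lambda>\<tau>. shifted \<tau> (picard_limit \<tau>) k)) has_real_derivative
      shifted t (picard_limit t) k) (at t within {0..T})"
    using DERIV_add[OF DERIV_const integral_has_real_derivative[OF
          shifted_continuous[OF picard_limit_continuous] t]] by simp
  then show ?thesis
    by (rule has_field_derivative_transform_within[of _ _ _ _ 1])
      (use t picard_limit_integral_equation(2)[OF _ k] in auto)
qed

definition solution :: "real \<Rightarrow> nat \<Rightarrow> real"
  where "solution t k = exp (- (\<Lambda> * t)) * picard_limit t k"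

lemma solution_bounds: "t \<in> {0..T} \<Longrightarrow> 0 \<le> solution t k \<and> solution t k \<le> \<eta>"
  using picard_limit_bounds[of t k] mult_left_mono[of _ _ "exp (- (\<Lambda> * t))"]
  unfolding solution_def by (auto simp: exp_minus field_simps)

lemma solution_tridiag_solution: "tridiag_solution T a b c \<psi> s0 solution"
  unfolding tridiag_solution_def
proof (intro conjI allI impI ballI)
  fix k :: nat
  show "continuous_on {0..T} (\<lambda>t. solution t k)"
    unfolding solution_def by (intro continuous_intros picard_limit_continuous)
next
  fix k :: nat and t assume "1 \<le> k" "t \<in> {0<..T}"
  then have t: "t \<in> {0..T}" and k: "k \<noteq> 0" by auto
  have "((\<lambda>\<tau>. solution \<tau> k) has_real_derivative
      exp (- (\<Lambda> * t)) * (- \<Lambda>) * picard_limit t k + exp (- (\<Lambda> * t)) * shifted t (picard_limit t) k)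
      (at t within {0..T})"
    unfolding solution_def
    by (rule derivative_eq_intros picard_limit_derivative[OF t k] refl | simp)+
  then show "((\<lambda>\<tau>. solution \<tau> k) has_real_derivative tridiag (a t) (b t) (c t) (solution t) k)
      (at t within {0..T})"
    unfolding shifted_def tridiag_def solution_def by (simp add: algebra_simps)
next
  fix k :: nat assume "1 \<le> k"
  then show "solution 0 k = s0 k"
    using picard_limit_integral_equation(2)[of 0 k] T_nonneg unfolding solution_def by auto
next
  fix t show "solution t 0 = \<psi> t"
    unfolding solution_def picard_limit_boundary by (simp add: exp_minus)
qed

theorem exists_bounded_solution:
  "\<exists>s. tridiag_solution T a b c \<psi> s0 s \<and> bounded_on_T T s \<and>
       (\<forall>t\<in>{0..T}. \<forall>k. 0 \<le> s t k \<and> s t k \<le> \<eta>)"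
proof -
  have "bounded_on_T T solution"
    unfolding bounded_on_T_def using solution_bounds by (intro exI[of _ \<eta>]) fastforce
  then show ?thesis using solution_tridiag_solution solution_bounds by blast
qed

theorem bounded_solution_unique:
  assumes "tridiag_solution T a b c \<psi> s0 s1" "bounded_on_T T s1"
    and "tridiag_solution T a b c \<psi> s0 s2" "bounded_on_T T s2"
    and "t \<in> {0..T}"
  shows "s1 t k = s2 t k"
  using sub_bounds diag_bound super_bounds
  by (intro tridiag_solution_unique[OF _ \<Lambda>_pos assms]) fastforce

end

section \<open>The linearized problem as a tridiagonal system\<close>

text \<open>With \<open>g = lin_g \<dots> t\<close>, the drift term \<open>b_g D\<^sup>\<plusminus>g D\<^sup>\<plusminus>s\<close> at \<open>k\<close> equals
  \<open>lin_weight B (g k) (g (k \<plusminus> 1)) * (s (k \<plusminus> 1) - s k) / h\<^sup>2\<close>.\<close>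
definition lin_weight :: "real \<Rightarrow> real \<Rightarrow> real \<Rightarrow> real"
  where "lin_weight B x y = B * (y - x) / (2 * (1 + B * x))"

definition lin_sub :: "real \<Rightarrow> real \<Rightarrow> (nat \<Rightarrow> real) \<Rightarrow> nat \<Rightarrow> real"
  where "lin_sub h B g k = (1 + lin_weight B (g k) (g (k - 1))) / h\<^sup>2"

definition lin_super :: "real \<Rightarrow> real \<Rightarrow> (nat \<Rightarrow> real) \<Rightarrow> nat \<Rightarrow> real"
  where "lin_super h B g k = (1 + lin_weight B (g k) (g (k + 1))) / h\<^sup>2"

definition lin_diag :: "real \<Rightarrow> real \<Rightarrow> real \<Rightarrow> (nat \<Rightarrow> real) \<Rightarrow> (nat \<Rightarrow> real) \<Rightarrow> nat \<Rightarrow> real"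
  where "lin_diag h B lam g v k = lam * g k * (B * v k - 1)
    - (2 + lin_weight B (g k) (g (k - 1)) + lin_weight B (g k) (g (k + 1))) / h\<^sup>2"

lemma lin_rhs_eq_tridiag:
  assumes "h \<noteq> 0"
  shows "Lap h u k + b_coef 1 B (g k) * (Dp h g k * Dp h u k + Dm h g k * Dm h u k)
      + gamma_coef lam (g k) * u k * (B * v k - 1)
    = tridiag (lin_sub h B g) (lin_diag h B lam g v) (lin_super h B g) u k"
proof -
  have weight: "lin_weight B (g k) y = b_coef 1 B (g k) * (y - g k)" for y
    unfolding lin_weight_def b_coef_def by simp
  show ?thesis
    using assms unfolding tridiag_def lin_sub_def lin_super_def lin_diag_def weight
      Lap_def Dp_def Dm_def gamma_coef_def
    by (simp add: field_simps power2_eq_square)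
qed

lemma lin_row_sum:
  "lin_sub h B g k + lin_diag h B lam g v k + lin_super h B g k = lam * g k * (B * v k - 1)"
  unfolding lin_sub_def lin_super_def lin_diag_def
  by (simp add: add_divide_distrib[symmetric] algebra_simps)

lemma lin_weight_ge:
  assumes "0 < 1 + B * x" "0 < 1 + B * y"
  shows "-1 \<le> lin_weight B x y"
proof -
  have "-1 * (2 * (1 + B * x)) \<le> B * (y - x)" using assms by (simp add: algebra_simps)
  then show ?thesis using assms(1) unfolding lin_weight_def by (simp add: le_divide_eq)
qed

lemma lin_weight_abs_le:
  assumes "\<bar>B\<bar> \<le> 1" "x \<in> {0..C}" "y \<in> {0..C}" "0 < p" "p \<le> 1 + B * x"
  shows "\<bar>lin_weight B x y\<bar> \<le> C / (2 * p)"
proof -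
  have "\<bar>B * (y - x)\<bar> \<le> C"
    using assms(1-3) mult_mono[of "\<bar>B\<bar>" 1 "\<bar>y - x\<bar>" C] by (auto simp: abs_mult)
  moreover have "2 * p \<le> \<bar>2 * (1 + B * x)\<bar>" using assms(5) by simp
  ultimately show ?thesis
    unfolding lin_weight_def abs_divide using assms(4) by (intro frac_le) auto
qed

lemma lin_coef_bounds:
  fixes g v :: "nat \<Rightarrow> real"
  assumes h: "0 < h" and B: "\<bar>B\<bar> \<le> 1" and p: "0 < p" and lam: "0 \<le> lam"
    and g: "\<And>j. 0 \<le> g j \<and> g j \<le> C0 \<and> p \<le> 1 + B * g j"
    and v: "0 \<le> v k" "v k \<le> \<eta>"
  defines "\<Lambda> \<equiv> (2 + C0 / p) / h\<^sup>2 + lam * C0 * (\<eta> + 1)"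
  shows "0 \<le> lin_sub h B g k \<and> lin_sub h B g k \<le> \<Lambda>"
    and "0 \<le> lin_super h B g k \<and> lin_super h B g k \<le> \<Lambda>"
    and "\<bar>lin_diag h B lam g v k\<bar> \<le> \<Lambda>"
proof -
  have w_ge: "-1 \<le> lin_weight B (g k) (g j)" for j
    using g[of k] g[of j] p by (intro lin_weight_ge) linarith+
  have w_le: "\<bar>lin_weight B (g k) (g j)\<bar> \<le> C0 / (2 * p)" for j
    using g[of k] g[of j] by (intro lin_weight_abs_le[OF B _ _ p]) auto
  have C0: "0 \<le> C0" using g[of 0] by linarith
  have hsq: "0 < h\<^sup>2" using h by simp
  have reaction: "\<bar>lam * g k * (B * v k - 1)\<bar> \<le> lam * C0 * (\<eta> + 1)"
  proof -
    have "\<bar>B * v k\<bar> \<le> \<eta>"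
      using B v mult_mono[of "\<bar>B\<bar>" 1 "\<bar>v k\<bar>" \<eta>] by (auto simp: abs_mult)
    then have "\<bar>B * v k - 1\<bar> \<le> \<eta> + 1" by (simp add: abs_le_iff)
    then show ?thesis
      unfolding abs_mult using lam g[of k] by (auto intro!: mult_mono)
  qed
  have "(1 + C0 / (2 * p)) / h\<^sup>2 \<le> (2 + C0 / p) / h\<^sup>2"
    using C0 p hsq by (intro divide_right_mono) (auto simp: field_simps)
  moreover have "0 \<le> lam * C0 * (\<eta> + 1)" using reaction by linarith
  ultimately have "(1 + C0 / (2 * p)) / h\<^sup>2 \<le> \<Lambda>" unfolding \<Lambda>_def by linarith
  moreover have "0 \<le> (1 + lin_weight B (g k) (g j)) / h\<^sup>2" for j
    using w_ge[of j] by simp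
  moreover have "(1 + lin_weight B (g k) (g j)) / h\<^sup>2 \<le> (1 + C0 / (2 * p)) / h\<^sup>2" for j
    using w_le[of j] hsq by (intro divide_right_mono) auto
  ultimately show "0 \<le> lin_sub h B g k \<and> lin_sub h B g k \<le> \<Lambda>"
    and "0 \<le> lin_super h B g k \<and> lin_super h B g k \<le> \<Lambda>"
    unfolding lin_sub_def lin_super_def by (meson order_trans)+
  have "\<bar>2 + lin_weight B (g k) (g (k - 1)) + lin_weight B (g k) (g (k + 1))\<bar> \<le> 2 + C0 / p"
    using w_le[of "k - 1"] w_le[of "k + 1"] by (simp add: abs_le_iff field_simps)
  then have drift: "\<bar>(2 + lin_weight B (g k) (g (k - 1)) + lin_weight B (g k) (g (k + 1))) / h\<^sup>2\<bar>
      \<le> (2 + C0 / p) / h\<^sup>2"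
    unfolding abs_divide using hsq by (simp add: divide_right_mono)
  show "\<bar>lin_diag h B lam g v k\<bar> \<le> \<Lambda>"
    unfolding lin_diag_def \<Lambda>_def
    using order_trans[OF abs_triangle_ineq4 add_mono[OF reaction drift]] by (simp add: add.commute)
qed

lemma lin_g_bounds:
  assumes lam: "0 \<le> lam" and c: "0 < c0 k" "0 < 1 + B * c0 k"
    and I: "0 \<le> integral {0..t} (\<lambda>\<tau>. f \<tau> k)"
  shows "1 \<le> (1 + B * c0 k) * exp (lam * integral {0..t} (\<lambda>\<tau>. f \<tau> k)) - B * c0 k"
    and "0 < lin_g 1 B lam c0 f t k" "lin_g 1 B lam c0 f t k \<le> c0 k"
    and "min 1 (1 + B * c0 k) \<le> 1 + B * lin_g 1 B lam c0 f t k"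
proof -
  define E where "E = exp (lam * integral {0..t} (\<lambda>\<tau>. f \<tau> k))"
  have "1 \<le> E" unfolding E_def using lam I by simp
  then have den: "1 \<le> (1 + B * c0 k) * E - B * c0 k"
    using c(2) mult_nonneg_nonneg[of "1 + B * c0 k" "E - 1"] by (simp add: algebra_simps)
  then show "1 \<le> (1 + B * c0 k) * exp (lam * integral {0..t} (\<lambda>\<tau>. f \<tau> k)) - B * c0 k"
    unfolding E_def .
  have g: "lin_g 1 B lam c0 f t k = c0 k / ((1 + B * c0 k) * E - B * c0 k)"
    unfolding lin_g_def phi_def E_def by simp
  show pos: "0 < lin_g 1 B lam c0 f t k" unfolding g using den c by simp
  show le: "lin_g 1 B lam c0 f t k \<le> c0 k" unfolding g using den c by (simp add: divide_le_eq)
  show "min 1 (1 + B * c0 k) \<le> 1 + B * lin_g 1 B lam c0 f t k"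
  proof (cases "0 \<le> B")
    case True
    then show ?thesis using pos by (intro min.coboundedI1) simp
  next
    case False
    then show ?thesis using mult_left_mono_neg[OF le, of B] by (intro min.coboundedI2) simp
  qed
qed

lemma lin_g_on_interval:
  assumes lam: "0 \<le> lam" and p: "0 < p" "p \<le> 1"
    and c0: "\<And>k. 0 < c0 k \<and> c0 k \<le> C0 \<and> p \<le> 1 + B * c0 k"
    and f_cont: "continuous_on {0..T} (\<lambda>t. f t k)"
    and f_nonneg: "\<And>t. t \<in> {0..T} \<Longrightarrow> 0 \<le> f t k"
  shows "continuous_on {0..T} (\<lambda>t. lin_g 1 B lam c0 f t k)"
    and "t \<in> {0..T} \<Longrightarrow> 0 \<le> lin_g 1 B lam c0 f t k \<and> lin_g 1 B lam c0 f t k \<le> C0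
      \<and> p \<le> 1 + B * lin_g 1 B lam c0 f t k"
proof -
  have c: "0 < c0 k" "0 < 1 + B * c0 k" using c0[of k] p by auto
  have I: "0 \<le> integral {0..t} (\<lambda>\<tau>. f \<tau> k)" if "t \<in> {0..T}" for t
    using that f_nonneg
    by (intro integral_nonneg integrable_continuous_interval continuous_on_subset[OF f_cont]) auto
  note g_bounds = lin_g_bounds[of lam c0 k B _ f, OF lam c I]
  have "continuous_on {0..T} (\<lambda>t. integral {0..t} (\<lambda>\<tau>. f \<tau> k))"
    by (intro indefinite_integral_continuous_1 integrable_continuous_interval f_cont)
  then show "continuous_on {0..T} (\<lambda>t. lin_g 1 B lam c0 f t k)"
    using g_bounds(1) unfolding lin_g_def phi_def by (auto intro!: continuous_intros) fastforce
  assume t: "t \<in> {0..T}"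
  have "p \<le> min 1 (1 + B * c0 k)" using c0[of k] p(2) by simp
  then show "0 \<le> lin_g 1 B lam c0 f t k \<and> lin_g 1 B lam c0 f t k \<le> C0
      \<and> p \<le> 1 + B * lin_g 1 B lam c0 f t k"
    using g_bounds(2-4)[OF t] c0[of k] by (intro conjI) linarith+
qed

lemma linearized_metzler_tridiag:
  assumes h: "0 < h" and B: "\<bar>B\<bar> \<le> 1" and lam: "0 < lam" and p: "0 < p" "p \<le> 1" and T: "0 \<le> T"
    and c0: "\<And>k. 0 < c0 k \<and> c0 k \<le> C0 \<and> p \<le> 1 + B * c0 k"
    and f_cont: "\<And>k. continuous_on {0..T} (\<lambda>t. f t k)"
    and f_bounds: "\<And>t k. t \<in> {0..T} \<Longrightarrow> 0 \<le> f t k \<and> f t k \<le> \<eta> \<and> B * f t k \<le> 1"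
    and \<psi>: "continuous_on {0..T} \<psi>" "\<And>t. t \<in> {0..T} \<Longrightarrow> 0 \<le> \<psi> t \<and> \<psi> t \<le> \<eta>"
    and s0: "\<And>k. 0 \<le> s0 k \<and> s0 k \<le> \<eta>"
  shows "metzler_tridiag T ((2 + C0 / p) / h\<^sup>2 + lam * C0 * (\<eta> + 1)) \<eta>
    (\<lambda>t. lin_sub h B (lin_g 1 B lam c0 f t)) (\<lambda>t. lin_diag h B lam (lin_g 1 B lam c0 f t) (f t))
    (\<lambda>t. lin_super h B (lin_g 1 B lam c0 f t)) \<psi> s0"
proof -
  let ?g = "lin_g 1 B lam c0 f"
  have g_cont: "continuous_on {0..T} (\<lambda>t. ?g t k)"
    and g_bounds: "t \<in> {0..T} \<Longrightarrow> 0 \<le> ?g t k \<and> ?g t k \<le> C0 \<and> p \<le> 1 + B * ?g t k" for t k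
    using lin_g_on_interval[OF less_imp_le[OF lam] p c0 f_cont] f_bounds by auto
  have weight_cont: "continuous_on {0..T} (\<lambda>t. lin_weight B (?g t k) (?g t j))" for k j
    unfolding lin_weight_def
  proof (intro continuous_intros g_cont ballI)
    fix t assume "t \<in> {0..T}"
    then show "2 * (1 + B * ?g t k) \<noteq> 0" using g_bounds[of t k] p by auto
  qed
  note coef_bounds = lin_coef_bounds[OF h B p(1) less_imp_le[OF lam] g_bounds]
  show ?thesis
  proof unfold_locales
    have "0 < (2 + C0 / p) / h\<^sup>2" using h p c0[of 0] by (intro divide_pos_pos add_pos_nonneg) auto
    moreover have "0 \<le> lam * C0 * (\<eta> + 1)" using lam c0[of 0] s0[of 0] by simp
    ultimately show "0 < (2 + C0 / p) / h\<^sup>2 + lam * C0 * (\<eta> + 1)" by linarith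
    fix k
    show "continuous_on {0..T} (\<lambda>t. lin_sub h B (?g t) k)"
      "continuous_on {0..T} (\<lambda>t. lin_diag h B lam (?g t) (f t) k)"
      "continuous_on {0..T} (\<lambda>t. lin_super h B (?g t) k)"
      unfolding lin_sub_def lin_diag_def lin_super_def
      using h by (auto intro!: continuous_intros weight_cont g_cont f_cont)
    fix t assume t: "t \<in> {0..T}"
    show "0 \<le> lin_sub h B (?g t) k \<and> lin_sub h B (?g t) k \<le> (2 + C0 / p) / h\<^sup>2 + lam * C0 * (\<eta> + 1)"
      "0 \<le> lin_super h B (?g t) k \<and> lin_super h B (?g t) k \<le> (2 + C0 / p) / h\<^sup>2 + lam * C0 * (\<eta> + 1)"
      "\<bar>lin_diag h B lam (?g t) (f t) k\<bar> \<le> (2 + C0 / p) / h\<^sup>2 + lam * C0 * (\<eta> + 1)"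
      using coef_bounds[OF t] f_bounds[OF t, of k] by auto
    show "lin_sub h B (?g t) k + lin_diag h B lam (?g t) (f t) k + lin_super h B (?g t) k \<le> 0"
      unfolding lin_row_sum using lam g_bounds[OF t, of k] f_bounds[OF t, of k]
      by (simp add: mult_nonneg_nonpos)
  qed (use T \<psi> s0 in auto)
qed

lemma is_lin_solution_iff_tridiag_solution:
  assumes "h \<noteq> 0"
  shows "is_lin_solution h 1 B lam T \<psi> s0 c0 f s \<longleftrightarrow>
    tridiag_solution T (\<lambda>t. lin_sub h B (lin_g 1 B lam c0 f t))
      (\<lambda>t. lin_diag h B lam (lin_g 1 B lam c0 f t) (f t)) (\<lambda>t. lin_super h B (lin_g 1 B lam c0 f t)) \<psi> s0 s"
  unfolding is_lin_solution_def tridiag_solution_def lin_rhs_eq_tridiag[OF assms] ..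

lemma in_L2_diff:
  assumes "in_L2 u" "in_L2 v"
  shows "in_L2 (\<lambda>k. u k - v k)"
  unfolding in_L2_def
proof (rule summable_comparison_test)
  have "(x - y)\<^sup>2 \<le> 2 * x\<^sup>2 + 2 * y\<^sup>2" for x y :: real
    using zero_le_power2[of "x + y"] unfolding power2_diff power2_sum by linarith
  then show "\<exists>N. \<forall>n\<ge>N. norm ((u (Suc n) - v (Suc n))\<^sup>2) \<le> 2 * (u (Suc n))\<^sup>2 + 2 * (v (Suc n))\<^sup>2"
    by auto
  show "summable (\<lambda>n. 2 * (u (Suc n))\<^sup>2 + 2 * (v (Suc n))\<^sup>2)"
    using assms unfolding in_L2_def by (intro summable_add summable_mult)
qed

lemma abs_le_L2norm:
  assumes "0 < h" "in_L2 u" "1 \<le> k"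
  shows "sqrt h * \<bar>u k\<bar> \<le> L2norm h u"
proof -
  have "(u (Suc (k - 1)))\<^sup>2 \<le> (\<Sum>j. (u (Suc j))\<^sup>2)"
    using sum_le_suminf[of "\<lambda>j. (u (Suc j))\<^sup>2" "{k - 1}"] assms(2) unfolding in_L2_def by simp
  then have "sqrt (h * (u k)\<^sup>2) \<le> L2norm h u"
    unfolding L2norm_def using assms by (simp add: mult_left_mono)
  then show ?thesis by (simp add: real_sqrt_mult)
qed

lemma cond_F_continuous:
  assumes h: "0 < h" and F: "cond_F h T \<eta> \<psi> K f" and \<psi>: "continuous_on {0..T} \<psi>"
  shows "continuous_on {0..T} (\<lambda>t. f t k)"
proof (cases "k = 0")
  case True
  then show ?thesis
    using continuous_on_eq[OF \<psi>] F unfolding cond_F_def by auto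
next
  case False
  have L2: "\<And>t. t \<in> {0..T} \<Longrightarrow> in_L2 (f t)"
    and L2_cont: "\<And>t. t \<in> {0..T} \<Longrightarrow> ((\<lambda>\<tau>. L2norm h (\<lambda>k. f \<tau> k - f t k)) \<longlongrightarrow> 0) (at t within {0..T})"
    using F unfolding cond_F_def by auto
  show ?thesis unfolding continuous_on_def
  proof
    fix t assume t: "t \<in> {0..T}"
    have "((\<lambda>\<tau>. f \<tau> k - f t k) \<longlongrightarrow> 0) (at t within {0..T})"
    proof (rule Lim_null_comparison)
      show "\<forall>\<^sub>F \<tau> in at t within {0..T}. norm (f \<tau> k - f t k) \<le> L2norm h (\<lambda>k. f \<tau> k - f t k) / sqrt h"
        using abs_le_L2norm[OF h in_L2_diff[OF L2 L2[OF t]]] False h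
        by (auto simp: eventually_at_filter le_divide_eq mult.commute)
      show "((\<lambda>\<tau>. L2norm h (\<lambda>k. f \<tau> k - f t k) / sqrt h) \<longlongrightarrow> 0) (at t within {0..T})"
        using tendsto_divide[OF L2_cont[OF t] tendsto_const, of "sqrt h"] h by simp
    qed
    then show "((\<lambda>\<tau>. f \<tau> k) \<longlongrightarrow> f t k) (at t within {0..T})"
      by (simp add: LIM_zero_iff)
  qed
qed

theorem mainTheorem7:
  fixes h A B lam T \<eta> \<beta> cm C0 \<phi>min \<phi>max K :: real
    and \<psi> :: "real \<Rightarrow> real" and s0 c0 :: "nat \<Rightarrow> real" and f :: "real \<Rightarrow> nat \<Rightarrow> real"
  assumes h: "h > 0"
    and A: "A = 1" and B: "B = -1 \<or> B = 1"
    and lam: "lam > 0" and T: "T > 0" and eta: "\<eta> > 0"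
    and beta: "1/4 < \<beta>" "\<beta> < 1/2"
    and psi_holder: "holder_on \<beta> {0..T} \<psi>" and psi_cont: "continuous_on {0..T} \<psi>"
    and psi_bds: "\<forall>t\<in>{0..T}. 0 \<le> \<psi> t \<and> \<psi> t \<le> \<eta>" and psi0: "\<psi> 0 = 0"
    and s0_bds: "\<forall>k. 0 \<le> s0 k \<and> s0 k \<le> \<eta>" and s0_0: "s0 0 = 0"
    and s0_L2: "in_L2 s0" "in_L2 (Dp h s0)"
    and c0_bds: "0 < cm" "\<forall>k. cm \<le> c0 k \<and> c0 k \<le> C0"
    and c0_L2: "in_L2 (\<lambda>k. C0 - c0 k)" "in_L2 (Dp h c0)"
    and phi_bds: "0 < \<phi>min" "\<phi>min \<le> \<phi>max"
      "\<forall>c\<in>{0..C0}. \<phi>min \<le> phi A B c \<and> phi A B c \<le> \<phi>max"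
    and eta_lt: "B = 1 \<longrightarrow> \<eta> < 1"
    and K: "K > 0" and F: "cond_F h T \<eta> \<psi> K f"
  shows "(\<exists>s. is_lin_solution h A B lam T \<psi> s0 c0 f s \<and> bounded_on_T T s \<and>
              (\<forall>t\<in>{0..T}. \<forall>k\<ge>1. 0 \<le> s t k \<and> s t k \<le> \<eta>)) \<and>
         (\<forall>s1 s2. is_lin_solution h A B lam T \<psi> s0 c0 f s1 \<and> bounded_on_T T s1 \<and>
                  is_lin_solution h A B lam T \<psi> s0 c0 f s2 \<and> bounded_on_T T s2 \<longrightarrow>
                  (\<forall>t\<in>{0..T}. \<forall>k. s1 t k = s2 t k))"
proof -
  have f_nonneg: "\<forall>t\<in>{0..T}. \<forall>k. 0 \<le> f t k" using F unfolding cond_F_def by (elim conjE) assumption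
  have f_le: "\<forall>t\<in>{0..T}. \<forall>k. f t k \<le> \<eta>" using F unfolding cond_F_def by (elim conjE) assumption
  have f_bounds: "0 \<le> f t k \<and> f t k \<le> \<eta> \<and> B * f t k \<le> 1" if "t \<in> {0..T}" for t k
  proof -
    have "0 \<le> f t k" "f t k \<le> \<eta>" using f_nonneg f_le that by auto
    then show ?thesis using B eta_lt by auto
  qed
  define p where "p = min 1 \<phi>min"
  have p: "0 < p" "p \<le> 1" using phi_bds(1) unfolding p_def by auto
  have c0: "0 < c0 k \<and> c0 k \<le> C0 \<and> p \<le> 1 + B * c0 k" for k
  proof -
    have "0 < c0 k" "c0 k \<le> C0" using c0_bds by (auto intro: less_le_trans)
    moreover from this have "\<phi>min \<le> 1 + B * c0 k" using phi_bds(3) unfolding phi_def A by auto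
    ultimately show ?thesis unfolding p_def by linarith
  qed
  interpret metzler_tridiag T "(2 + C0 / p) / h\<^sup>2 + lam * C0 * (\<eta> + 1)" \<eta>
      "\<lambda>t. lin_sub h B (lin_g 1 B lam c0 f t)" "\<lambda>t. lin_diag h B lam (lin_g 1 B lam c0 f t) (f t)"
      "\<lambda>t. lin_super h B (lin_g 1 B lam c0 f t)" \<psi> s0
    using B by (intro linearized_metzler_tridiag[OF h _ lam p less_imp_le[OF T] c0
        cond_F_continuous[OF h F psi_cont] f_bounds psi_cont psi_bds[rule_format] s0_bds[rule_format]])
      auto
  show ?thesis
    unfolding A is_lin_solution_iff_tridiag_solution[OF less_imp_neq[OF h, symmetric]]
    by (intro conjI allI impI)
      (use exists_bounded_solution in blast, use bounded_solution_unique in blast)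
qed

end
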